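(* The locus of the nine-point center $X_5$ (triangle center function $h=s_2s_3\,[s_1^2(s_2^2+s_3^2)-(s_2^2-s_3^2)^2]$) over the 3-periodics of $E$ is the ellipse $x^2/a_5^2+y^2/b_5^2=1$, where $$a_5=\frac{-w_5'(a,b)+w_5''(a,b)\,\delta}{w_5(a,b)},\qquad b_5=\frac{w_5'(b,a)-w_5''(b,a)\,\delta}{w_5(b,a)},$$ with $w_5'(u,v)=u^2(u^2+3v^2)$, $w_5''(u,v)=3u^2+v^2$, $w_5(u,v)=4u(u^2-v^2)$.
   Context: Fix real numbers $a>b>0$, let $E$ be the ellipse $x^2/a^2+y^2/b^2=1$ and $\delta=\sqrt{a^4-a^2b^2+b^4}$. A 3-periodic is a non-degenerate triangle $P_1P_2P_3$ with all vertices on $E$ such that at each vertex $P_j$ the normal line to $E$ at $P_j$ bisects the interior angle of the triangle at $P_j$. For a triangle let $s_1=|P_2P_3|$, $s_2=|P_3P_1|$, $s_3=|P_1P_2|$. Given a triangle center function $h(s_1,s_2,s_3)$, the center $X_h$ is the point with trilinears $p:q:r=h(s_1,s_2,s_3):h(s_2,s_3,s_1):h(s_3,s_1,s_2)$, i.e. the Cartesian point $\dfrac{p s_1P_1+q s_2P_2+r s_3P_3}{p s_1+q s_2+r s_3}$. The locus of $X_h$ is the set of points $X_h(T)$ over all 3-periodics $T$. *)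

theory Defs
  imports "HOL-Analysis.Analysis"
begin

type_synonym pt = "real \<times> real"

definition on_ellipse :: "real \<Rightarrow> real \<Rightarrow> pt \<Rightarrow> bool" where
  "on_ellipse a b P \<longleftrightarrow> (fst P)^2 / a^2 + (snd P)^2 / b^2 = 1"

definition nondegenerate :: "pt \<Rightarrow> pt \<Rightarrow> pt \<Rightarrow> bool" where
  "nondegenerate P1 P2 P3 \<longleftrightarrow>
     (fst P2 - fst P1) * (snd P3 - snd P1) - (snd P2 - snd P1) * (fst P3 - fst P1) \<noteq> 0"

text \<open>The normal line to the ellipse at P (direction (x/a^2, y/b^2)) contains the internal
  angle bisector of the triangle at vertex P, whose other vertices are Q and R; the internal
  bisector direction is the sum of the unit vectors from P towards Q and towards R.\<close>
definition normal_bisects :: "real \<Rightarrow> real \<Rightarrow> pt \<Rightarrow> pt \<Rightarrow> pt \<Rightarrow> bool" where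
  "normal_bisects a b P Q R \<longleftrightarrow>
     (let n = (fst P / a^2, snd P / b^2);
          u = inverse (dist Q P) *\<^sub>R (Q - P) + inverse (dist R P) *\<^sub>R (R - P)
      in fst n * snd u - snd n * fst u = 0)"

definition three_periodic :: "real \<Rightarrow> real \<Rightarrow> pt \<Rightarrow> pt \<Rightarrow> pt \<Rightarrow> bool" where
  "three_periodic a b P1 P2 P3 \<longleftrightarrow>
     nondegenerate P1 P2 P3 \<and>
     on_ellipse a b P1 \<and> on_ellipse a b P2 \<and> on_ellipse a b P3 \<and>
     normal_bisects a b P1 P2 P3 \<and> normal_bisects a b P2 P3 P1 \<and> normal_bisects a b P3 P1 P2"

text \<open>Triangle center with trilinears h(s1,s2,s3):h(s2,s3,s1):h(s3,s1,s2).\<close>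
definition tri_center :: "(real \<Rightarrow> real \<Rightarrow> real \<Rightarrow> real) \<Rightarrow> pt \<Rightarrow> pt \<Rightarrow> pt \<Rightarrow> pt" where
  "tri_center h P1 P2 P3 =
     (let s1 = dist P2 P3; s2 = dist P3 P1; s3 = dist P1 P2;
          p = h s1 s2 s3; q = h s2 s3 s1; r = h s3 s1 s2
      in inverse (p * s1 + q * s2 + r * s3) *\<^sub>R
           ((p * s1) *\<^sub>R P1 + (q * s2) *\<^sub>R P2 + (r * s3) *\<^sub>R P3))"

definition locus :: "(real \<Rightarrow> real \<Rightarrow> real \<Rightarrow> real) \<Rightarrow> real \<Rightarrow> real \<Rightarrow> pt set" where
  "locus h a b = {tri_center h P1 P2 P3 | P1 P2 P3. three_periodic a b P1 P2 P3}"

definition h5 :: "real \<Rightarrow> real \<Rightarrow> real \<Rightarrow> real" where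
  "h5 s1 s2 s3 = s2 * s3 * (s1^2 * (s2^2 + s3^2) - (s2^2 - s3^2)^2)"

definition delta :: "real \<Rightarrow> real \<Rightarrow> real" where
  "delta a b = sqrt (a^4 - a^2 * b^2 + b^4)"

definition w5' :: "real \<Rightarrow> real \<Rightarrow> real" where "w5' u v = u^2 * (u^2 + 3 * v^2)"
definition w5'' :: "real \<Rightarrow> real \<Rightarrow> real" where "w5'' u v = 3 * u^2 + v^2"
definition w5 :: "real \<Rightarrow> real \<Rightarrow> real" where "w5 u v = 4 * u * (u^2 - v^2)"

end

theory Submission
  imports Defs
begin

text \<open>Parametrise the ellipse by eccentric anomaly, \<open>P = (a Re u, b Im u)\<close> with \<open>|u| = 1\<close>. The
  normal at a vertex bisects the angle iff the unit vectors towards the two other vertices have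
  equal components along the normal, and that component is a symmetric function of the two
  vertices; so a triangle is a 3-periodic iff this chord function takes one common value on
  its three sides. In eccentric anomalies this says that \<open>u\<^sub>1, u\<^sub>2, u\<^sub>3\<close> are the roots of
  \<open>u\<^sup>3 - D w u\<^sup>2 - D u + w\<close> for a unit \<open>w\<close> and a constant \<open>D \<in> (0,1)\<close> fixed by \<open>a, b\<close>; conversely
  every unit \<open>w\<close> yields three distinct unit roots by the intermediate value theorem. The
  circumcenter of that triangle is \<open>(A Re w, B Im w)\<close>, and since \<open>X\<^sub>5\<close> is \<open>(P\<^sub>1 + P\<^sub>2 + P\<^sub>3 - C)/2\<close>
  and \<open>u\<^sub>1 + u\<^sub>2 + u\<^sub>3 = D w\<close>, \<open>X\<^sub>5 = (a\<^sub>5 Re w, b\<^sub>5 Im w)\<close> sweeps an ellipse as \<open>w\<close> runs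
  over the unit circle.\<close>

section \<open>Normals as bisectors\<close>

lemma dist_Pair_Pair_sqrt: "dist (x, y) (x', y') = sqrt ((x - x')^2 + (y - y')^2)"
  for x y x' y' :: real
  by (simp add: dist_Pair_Pair dist_real_def)

lemma parallel_unit_sum_iff_equal_projections:
  fixes n1 n2 e1x e1y e2x e2y :: real
  assumes unit1: "e1x^2 + e1y^2 = 1" and unit2: "e2x^2 + e2y^2 = 1"
    and independent: "e1x * e2y - e1y * e2x \<noteq> 0"
  shows "n1 * (e1y + e2y) - n2 * (e1x + e2x) = 0 \<longleftrightarrow> n1 * e1x + n2 * e1y = n1 * e2x + n2 * e2y"
proof -
  let ?v1 = "e1x + e2x" and ?v2 = "e1y + e2y" and ?m1 = "e1x - e2x" and ?m2 = "e1y - e2y"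
  \<comment> \<open>the sum and the difference of two unit vectors are orthogonal\<close>
  have "?v1 * ?m1 + ?v2 * ?m2 = 0" using unit1 unit2 by algebra
  then have key: "(n1 * ?m1 + n2 * ?m2) * (?v1^2 + ?v2^2) = (?v1 * n2 - ?v2 * n1) * (?v1 * ?m2 - ?v2 * ?m1)"
    by algebra
  have "?v1 * ?m2 - ?v2 * ?m1 = -2 * (e1x * e2y - e1y * e2x)" by algebra
  then have cross_nz: "?v1 * ?m2 - ?v2 * ?m1 \<noteq> 0" using independent by simp
  then have sum_nz: "?v1^2 + ?v2^2 \<noteq> 0" by (auto simp: sum_power2_eq_zero_iff)
  have "n1 * ?v2 - n2 * ?v1 = 0 \<longleftrightarrow> ?v1 * n2 - ?v2 * n1 = 0" by (auto simp: algebra_simps)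
  also have "\<dots> \<longleftrightarrow> n1 * ?m1 + n2 * ?m2 = 0" using key cross_nz sum_nz by (metis mult_eq_0_iff)
  also have "\<dots> \<longleftrightarrow> n1 * e1x + n2 * e1y = n1 * e2x + n2 * e2y" by (simp add: algebra_simps)
  finally show ?thesis .
qed

text \<open>For \<open>P\<close> on the ellipse, \<open>bisector_ratio a b P Q\<close> is the component of the unit vector from
  \<open>P\<close> towards \<open>Q\<close> along the normal \<open>(x/a\<^sup>2, y/b\<^sup>2)\<close> at \<open>P\<close>; written this way it is symmetric in
  \<open>P\<close> and \<open>Q\<close>.\<close>
definition bisector_ratio :: "real \<Rightarrow> real \<Rightarrow> pt \<Rightarrow> pt \<Rightarrow> real" where
  "bisector_ratio a b P Q = (fst P * fst Q / a^2 + snd P * snd Q / b^2 - 1) / dist P Q"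

lemma bisector_ratio_commute: "bisector_ratio a b P Q = bisector_ratio a b Q P"
  by (simp add: bisector_ratio_def dist_commute mult.commute)

lemma normal_bisects_iff_bisector_ratio:
  assumes "a \<noteq> 0" "b \<noteq> 0" "on_ellipse a b P" "nondegenerate P Q R"
  shows "normal_bisects a b P Q R \<longleftrightarrow> bisector_ratio a b P Q = bisector_ratio a b P R"
proof -
  obtain x y qx qy rx ry where pts: "P = (x, y)" "Q = (qx, qy)" "R = (rx, ry)"
    by (metis prod.collapse)
  have ellipse: "x^2 / a^2 + y^2 / b^2 = 1" using assms(3) by (simp add: on_ellipse_def pts)
  have direction: "((zx - x) / s)^2 + ((zy - y) / s)^2 = 1 \<and>
      (x/a^2) * ((zx - x) / s) + (y/b^2) * ((zy - y) / s) = bisector_ratio a b P (zx, zy)"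
    if "(zx, zy) \<noteq> P" and s_def: "s = dist (zx, zy) P" for zx zy s
  proof
    have "s > 0" using that by simp
    have "((zx - x) / s)^2 + ((zy - y) / s)^2 = ((zx - x)^2 + (zy - y)^2) / s^2"
      by (simp add: power_divide add_divide_distrib)
    also have "(zx - x)^2 + (zy - y)^2 = s^2"
      by (simp add: s_def pts dist_Pair_Pair_sqrt power2_commute[of x] power2_commute[of y])
    finally show "((zx - x) / s)^2 + ((zy - y) / s)^2 = 1" using \<open>s > 0\<close> by simp
    have "(x/a^2) * ((zx - x) / s) + (y/b^2) * ((zy - y) / s) =
        ((x * zx / a^2 + y * zy / b^2) - (x^2 / a^2 + y^2 / b^2)) / s"
      using assms(1,2) \<open>s > 0\<close> by (simp add: field_simps power2_eq_square)
    then show "(x/a^2) * ((zx - x) / s) + (y/b^2) * ((zy - y) / s) = bisector_ratio a b P (zx, zy)"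
      using ellipse by (simp add: bisector_ratio_def s_def pts dist_commute)
  qed
  define sQ where "sQ = dist Q P"
  define sR where "sR = dist R P"
  have "Q \<noteq> P" "R \<noteq> P" using assms(4) by (auto simp: nondegenerate_def)
  note dirQ = direction[of qx qy sQ, folded pts, OF this(1) sQ_def]
    and dirR = direction[of rx ry sR, folded pts, OF this(2) sR_def]
  have "((qx - x) / sQ) * ((ry - y) / sR) - ((qy - y) / sQ) * ((rx - x) / sR) =
      ((qx - x) * (ry - y) - (qy - y) * (rx - x)) / (sQ * sR)"
    by (metis times_divide_times_eq diff_divide_distrib)
  then have independent: "((qx - x) / sQ) * ((ry - y) / sR) - ((qy - y) / sQ) * ((rx - x) / sR) \<noteq> 0"
    using assms(4) \<open>Q \<noteq> P\<close> \<open>R \<noteq> P\<close> by (simp add: nondegenerate_def pts sQ_def sR_def)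
  have "normal_bisects a b P Q R \<longleftrightarrow>
      (x/a^2) * ((qy - y) / sQ + (ry - y) / sR) - (y/b^2) * ((qx - x) / sQ + (rx - x) / sR) = 0"
    by (simp add: normal_bisects_def pts sQ_def sR_def divide_inverse algebra_simps)
  also have "\<dots> \<longleftrightarrow> bisector_ratio a b P Q = bisector_ratio a b P R"
    using parallel_unit_sum_iff_equal_projections[OF conjunct1[OF dirQ] conjunct1[OF dirR] independent]
    by (simp only: conjunct2[OF dirQ] conjunct2[OF dirR] pts)
  finally show ?thesis .
qed

lemma nondegenerate_rotate: "nondegenerate P Q R \<Longrightarrow> nondegenerate Q R P"
  by (simp add: nondegenerate_def algebra_simps)

lemma three_periodic_iff_bisector_ratio:
  assumes "a \<noteq> 0" "b \<noteq> 0"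
  shows "three_periodic a b P1 P2 P3 \<longleftrightarrow>
    nondegenerate P1 P2 P3 \<and> on_ellipse a b P1 \<and> on_ellipse a b P2 \<and> on_ellipse a b P3 \<and>
    bisector_ratio a b P1 P2 = bisector_ratio a b P2 P3 \<and>
    bisector_ratio a b P2 P3 = bisector_ratio a b P3 P1"
proof -
  have "normal_bisects a b P1 P2 P3 \<and> normal_bisects a b P2 P3 P1 \<and> normal_bisects a b P3 P1 P2 \<longleftrightarrow>
      bisector_ratio a b P1 P2 = bisector_ratio a b P2 P3 \<and>
      bisector_ratio a b P2 P3 = bisector_ratio a b P3 P1"
    if "nondegenerate P1 P2 P3" "on_ellipse a b P1" "on_ellipse a b P2" "on_ellipse a b P3"
    using that normal_bisects_iff_bisector_ratio[OF assms] nondegenerate_rotate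
      bisector_ratio_commute by metis
  then show ?thesis unfolding three_periodic_def by blast
qed

section \<open>The nine-point center\<close>

text \<open>Barycentric weight of \<open>X\<^sub>5\<close> in terms of the squared side lengths.\<close>
definition nine_point_weight :: "real \<Rightarrow> real \<Rightarrow> real \<Rightarrow> real" where
  "nine_point_weight A B C = A * (B + C) - (B - C)^2"

lemma h5_mult_side: "h5 s1 s2 s3 * s1 = s1 * s2 * s3 * nine_point_weight (s1^2) (s2^2) (s3^2)"
  unfolding h5_def nine_point_weight_def by algebra

lemma nine_point_weight_sum:
  fixes x1 y1 x2 y2 x3 y3 :: real
  defines "A \<equiv> (x2 - x3)^2 + (y2 - y3)^2" and "B \<equiv> (x3 - x1)^2 + (y3 - y1)^2"
    and "C \<equiv> (x1 - x2)^2 + (y1 - y2)^2"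
  shows "nine_point_weight A B C + nine_point_weight B C A + nine_point_weight C A B =
    8 * ((x2 - x1) * (y3 - y1) - (y2 - y1) * (x3 - x1))^2"
  unfolding A_def B_def C_def nine_point_weight_def by algebra

text \<open>Both sides are \<open>-2 s\<^sub>1\<^sup>2 s\<^sub>2 s\<^sub>3 cos A\<close>, since \<open>s\<^sub>1 = 2 R sin A\<close> and \<open>x\<^sub>2 y\<^sub>3 - y\<^sub>2 x\<^sub>3 = R\<^sup>2 sin 2A\<close>; the proof
  supplies the combination of the circle equations explicitly.\<close>
lemma concyclic_side_identity:
  fixes x1 y1 x2 y2 x3 y3 r :: real
  assumes "x1^2 + y1^2 = r" "x2^2 + y2^2 = r" "x3^2 + y3^2 = r"
  shows "((x2 - x3)^2 + (y2 - y3)^2) *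
      (((x2 - x3)^2 + (y2 - y3)^2) - ((x3 - x1)^2 + (y3 - y1)^2) - ((x1 - x2)^2 + (y1 - y2)^2)) =
    -4 * ((x2 - x1) * (y3 - y1) - (y2 - y1) * (x3 - x1)) * (x2 * y3 - y2 * x3)"
proof -
  have "((x2 - x3)^2 + (y2 - y3)^2) *
      (((x2 - x3)^2 + (y2 - y3)^2) - ((x3 - x1)^2 + (y3 - y1)^2) - ((x1 - x2)^2 + (y1 - y2)^2)) -
    -4 * ((x2 - x1) * (y3 - y1) - (y2 - y1) * (x3 - x1)) * (x2 * y3 - y2 * x3) =
    (4*x2*x3 - 2*x2^2 - 2*x3^2 + 4*y2*y3 - 2*y2^2 - 2*y3^2) * (x1^2 + y1^2 - r) +
    (-2*r + 2*x1*x2 - 2*x1*x3 - 2*x2*x3 + 4*x3^2 + 2*y1*y2 - 2*y1*y3 - 2*y2*y3 + 4*y3^2) *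
      (x2^2 + y2^2 - r) +
    (2*r - 2*x1*x2 + 2*x1*x3 - 2*x2*x3 - 2*y1*y2 + 2*y1*y3 - 2*y2*y3) * (x3^2 + y3^2 - r)"
    by algebra
  then show ?thesis using assms by simp
qed

text \<open>With the circumcenter at the origin, the weighted sum of the vertices is half the weight
  sum times the centroid sum, i.e.\ \<open>X\<^sub>5 = (P\<^sub>1 + P\<^sub>2 + P\<^sub>3)/2\<close>.\<close>
lemma nine_point_weights_concyclic:
  fixes x1 y1 x2 y2 x3 y3 r :: real
  assumes circle: "x1^2 + y1^2 = r" "x2^2 + y2^2 = r" "x3^2 + y3^2 = r"
  defines "S1 \<equiv> (x2 - x3)^2 + (y2 - y3)^2" and "S2 \<equiv> (x3 - x1)^2 + (y3 - y1)^2"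
    and "S3 \<equiv> (x1 - x2)^2 + (y1 - y2)^2"
  defines "W1 \<equiv> nine_point_weight S1 S2 S3" and "W2 \<equiv> nine_point_weight S2 S3 S1"
    and "W3 \<equiv> nine_point_weight S3 S1 S2"
  shows "W1 * x1 + W2 * x2 + W3 * x3 = (W1 + W2 + W3) * (x1 + x2 + x3) / 2"
    and "W1 * y1 + W2 * y2 + W3 * y3 = (W1 + W2 + W3) * (y1 + y2 + y3) / 2"
proof -
  define \<Delta> where "\<Delta> = (x2 - x1) * (y3 - y1) - (y2 - y1) * (x3 - x1)"
  have "W1 - (W1 + W2 + W3) / 2 = S1 * (S1 - S2 - S3)"
    unfolding W1_def W2_def W3_def nine_point_weight_def by algebra
  also have "\<dots> = -4 * \<Delta> * (x2 * y3 - y2 * x3)"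
    unfolding S1_def S2_def S3_def \<Delta>_def by (rule concyclic_side_identity[OF circle])
  finally have e1: "W1 - (W1 + W2 + W3) / 2 = -4 * \<Delta> * (x2 * y3 - y2 * x3)" .
  have "W2 - (W1 + W2 + W3) / 2 = S2 * (S2 - S3 - S1)"
    unfolding W1_def W2_def W3_def nine_point_weight_def by algebra
  also have "\<dots> = -4 * ((x3 - x2) * (y1 - y2) - (y3 - y2) * (x1 - x2)) * (x3 * y1 - y3 * x1)"
    unfolding S1_def S2_def S3_def by (rule concyclic_side_identity[OF circle(2,3,1)])
  also have "\<dots> = -4 * \<Delta> * (x3 * y1 - y3 * x1)" unfolding \<Delta>_def by algebra
  finally have e2: "W2 - (W1 + W2 + W3) / 2 = -4 * \<Delta> * (x3 * y1 - y3 * x1)" .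
  have "W3 - (W1 + W2 + W3) / 2 = S3 * (S3 - S1 - S2)"
    unfolding W1_def W2_def W3_def nine_point_weight_def by algebra
  also have "\<dots> = -4 * ((x1 - x3) * (y2 - y3) - (y1 - y3) * (x2 - x3)) * (x1 * y2 - y1 * x2)"
    unfolding S1_def S2_def S3_def by (rule concyclic_side_identity[OF circle(3,1,2)])
  also have "\<dots> = -4 * \<Delta> * (x1 * y2 - y1 * x2)" unfolding \<Delta>_def by algebra
  finally have e3: "W3 - (W1 + W2 + W3) / 2 = -4 * \<Delta> * (x1 * y2 - y1 * x2)" .
  have combination: "W1 * z1 + W2 * z2 + W3 * z3 - (W1 + W2 + W3) * (z1 + z2 + z3) / 2 =
      -4 * \<Delta> * ((x2 * y3 - y2 * x3) * z1 + (x3 * y1 - y3 * x1) * z2 + (x1 * y2 - y1 * x2) * z3)"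
    for z1 z2 z3
  proof -
    have "W1 * z1 + W2 * z2 + W3 * z3 - (W1 + W2 + W3) * (z1 + z2 + z3) / 2 =
        (W1 - (W1 + W2 + W3) / 2) * z1 + (W2 - (W1 + W2 + W3) / 2) * z2 +
        (W3 - (W1 + W2 + W3) / 2) * z3"
      by (simp add: field_simps)
    then show ?thesis unfolding e1 e2 e3 by (simp add: algebra_simps)
  qed
  \<comment> \<open>the bracket is a determinant with a repeated row\<close>
  show "W1 * x1 + W2 * x2 + W3 * x3 = (W1 + W2 + W3) * (x1 + x2 + x3) / 2"
  proof -
    have "(x2 * y3 - y2 * x3) * x1 + (x3 * y1 - y3 * x1) * x2 + (x1 * y2 - y1 * x2) * x3 = 0"
      by algebra
    then show ?thesis using combination[of x1 x2 x3] by simp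
  qed
  show "W1 * y1 + W2 * y2 + W3 * y3 = (W1 + W2 + W3) * (y1 + y2 + y3) / 2"
  proof -
    have "(x2 * y3 - y2 * x3) * y1 + (x3 * y1 - y3 * x1) * y2 + (x1 * y2 - y1 * x2) * y3 = 0"
      by algebra
    then show ?thesis using combination[of y1 y2 y3] by simp
  qed
qed

lemma nondegenerate_distinct:
  assumes "nondegenerate P1 P2 P3"
  shows "P1 \<noteq> P2" "P2 \<noteq> P3" "P3 \<noteq> P1"
  using assms by (auto simp: nondegenerate_def algebra_simps)

text \<open>\<open>X\<^sub>5\<close> is the midpoint of the circumcenter \<open>C\<close> and the orthocenter \<open>P\<^sub>1 + P\<^sub>2 + P\<^sub>3 - 2 C\<close>.\<close>
lemma tri_center_h5_circumcenter:
  fixes P1 P2 P3 C :: pt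
  assumes nd: "nondegenerate P1 P2 P3"
    and equidistant: "dist P1 C = dist P2 C" "dist P1 C = dist P3 C"
  shows "tri_center h5 P1 P2 P3 = (1/2) *\<^sub>R (P1 + P2 + P3 - C)"
proof -
  obtain x1 y1 x2 y2 x3 y3 ox oy
    where pts: "P1 = (x1, y1)" "P2 = (x2, y2)" "P3 = (x3, y3)" "C = (ox, oy)"
    by (metis prod.collapse)
  define q1 where "q1 = x1 - ox" define q2 where "q2 = x2 - ox" define q3 where "q3 = x3 - ox"
  define r1 where "r1 = y1 - oy" define r2 where "r2 = y2 - oy" define r3 where "r3 = y3 - oy"
  note centered = q1_def q2_def q3_def r1_def r2_def r3_def
  have circle: "q1^2 + r1^2 = q1^2 + r1^2" "q2^2 + r2^2 = q1^2 + r1^2" "q3^2 + r3^2 = q1^2 + r1^2"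
    using equidistant by (simp_all add: pts centered dist_Pair_Pair_sqrt)
  define S1 where "S1 = (q2 - q3)^2 + (r2 - r3)^2"
  define S2 where "S2 = (q3 - q1)^2 + (r3 - r1)^2"
  define S3 where "S3 = (q1 - q2)^2 + (r1 - r2)^2"
  define W1 where "W1 = nine_point_weight S1 S2 S3"
  define W2 where "W2 = nine_point_weight S2 S3 S1"
  define W3 where "W3 = nine_point_weight S3 S1 S2"
  define s1 where "s1 = dist P2 P3"
  define s2 where "s2 = dist P3 P1"
  define s3 where "s3 = dist P1 P2"
  have sides: "s1^2 = S1" "s2^2 = S2" "s3^2 = S3"
    by (simp_all add: s1_def s2_def s3_def S1_def S2_def S3_def pts centered dist_Pair_Pair_sqrt)
  define k where "k = s1 * s2 * s3"
  have "k \<noteq> 0" using nondegenerate_distinct[OF nd] by (simp add: k_def s1_def s2_def s3_def)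
  have weights: "h5 s1 s2 s3 * s1 = k * W1" "h5 s2 s3 s1 * s2 = k * W2" "h5 s3 s1 s2 * s3 = k * W3"
    unfolding k_def W1_def W2_def W3_def sides[symmetric] h5_mult_side by (simp_all add: ac_simps)
  have "tri_center h5 P1 P2 P3 =
      inverse (k * (W1 + W2 + W3)) *\<^sub>R (k *\<^sub>R (W1 *\<^sub>R P1 + W2 *\<^sub>R P2 + W3 *\<^sub>R P3))"
    unfolding tri_center_def Let_def s1_def[symmetric] s2_def[symmetric] s3_def[symmetric] weights
    by (simp add: distrib_left scaleR_add_right)
  also have "\<dots> = inverse (W1 + W2 + W3) *\<^sub>R (W1 *\<^sub>R P1 + W2 *\<^sub>R P2 + W3 *\<^sub>R P3)"
    using \<open>k \<noteq> 0\<close> by simp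
  finally have barycentric:
    "tri_center h5 P1 P2 P3 = inverse (W1 + W2 + W3) *\<^sub>R (W1 *\<^sub>R P1 + W2 *\<^sub>R P2 + W3 *\<^sub>R P3)" .
  have "W1 + W2 + W3 \<noteq> 0"
  proof -
    have "W1 + W2 + W3 = 8 * ((q2 - q1) * (r3 - r1) - (r2 - r1) * (q3 - q1))^2"
      unfolding W1_def W2_def W3_def S1_def S2_def S3_def by (rule nine_point_weight_sum)
    then show ?thesis using nd by (simp add: nondegenerate_def pts centered)
  qed
  moreover have "W1 * x1 + W2 * x2 + W3 * x3 = (W1 + W2 + W3) * (x1 + x2 + x3 - ox) / 2"
    using nine_point_weights_concyclic(1)[OF circle] unfolding W1_def W2_def W3_def S1_def S2_def S3_def
    by (simp add: centered algebra_simps)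
  moreover have "W1 * y1 + W2 * y2 + W3 * y3 = (W1 + W2 + W3) * (y1 + y2 + y3 - oy) / 2"
    using nine_point_weights_concyclic(2)[OF circle] unfolding W1_def W2_def W3_def S1_def S2_def S3_def
    by (simp add: centered algebra_simps)
  ultimately show ?thesis unfolding barycentric by (simp add: pts field_simps)
qed

section \<open>Eccentric-anomaly coordinates\<close>

definition ecc_point :: "real \<Rightarrow> real \<Rightarrow> complex \<Rightarrow> pt" where
  "ecc_point a b u = (a * Re u, b * Im u)"

lemma on_ellipse_ecc_point:
  assumes "a \<noteq> 0" "b \<noteq> 0"
  shows "on_ellipse a b (ecc_point a b u) \<longleftrightarrow> cmod u = 1"
  using assms by (simp add: on_ellipse_def ecc_point_def power_mult_distrib cmod_def)

lemma ellipse_eq_ecc_point_image: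
  assumes "a \<noteq> 0" "b \<noteq> 0"
  shows "Collect (on_ellipse a b) = ecc_point a b ` sphere 0 1"
proof (intro set_eqI iffI)
  fix P assume "P \<in> Collect (on_ellipse a b)"
  then have "on_ellipse a b (ecc_point a b (Complex (fst P / a) (snd P / b)))"
    using assms by (simp add: ecc_point_def)
  moreover have "P = ecc_point a b (Complex (fst P / a) (snd P / b))"
    using assms by (simp add: ecc_point_def)
  ultimately show "P \<in> ecc_point a b ` sphere 0 1"
    using on_ellipse_ecc_point[OF assms] by (metis image_eqI mem_sphere_0)
qed (use on_ellipse_ecc_point[OF assms] in auto)

lemma nondegenerate_ecc_point_iff:
  assumes "a \<noteq> 0" "b \<noteq> 0" "cmod u1 = 1" "cmod u2 = 1" "cmod u3 = 1"
  shows "nondegenerate (ecc_point a b u1) (ecc_point a b u2) (ecc_point a b u3) \<longleftrightarrow>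
    distinct [u1, u2, u3]"
proof -
  define \<Delta> where "\<Delta> = (Re u2 - Re u1) * (Im u3 - Im u1) - (Im u2 - Im u1) * (Re u3 - Re u1)"
  have unit: "Re u^2 + Im u^2 = 1" if "cmod u = 1" for u
    using that cmod_power2[of u] by simp
  have "4 * \<Delta>^2 = cmod (u2 - u3)^2 * cmod (u3 - u1)^2 * cmod (u1 - u2)^2"
    using unit[OF assms(3)] unit[OF assms(4)] unit[OF assms(5)]
    unfolding \<Delta>_def cmod_power2 by (simp only: minus_complex.sel) algebra
  then have "\<Delta> \<noteq> 0 \<longleftrightarrow> distinct [u1, u2, u3]" by auto
  moreover have "nondegenerate (ecc_point a b u1) (ecc_point a b u2) (ecc_point a b u3) \<longleftrightarrow>
      a * b * \<Delta> \<noteq> 0"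
    by (simp add: nondegenerate_def ecc_point_def \<Delta>_def algebra_simps)
  ultimately show ?thesis using assms(1,2) by simp
qed

lemma bisector_ratio_ecc_point:
  assumes "a \<noteq> 0" "b \<noteq> 0" "cmod u = 1" "cmod v = 1" "u \<noteq> v"
  shows "bisector_ratio a b (ecc_point a b u) (ecc_point a b v) =
    - sqrt ((1 - Re (u * cnj v)) / (a^2 * (1 - Re (u * v)) + b^2 * (1 + Re (u * v))))"
    and "1 - Re (u * cnj v) > 0"
    and "a^2 * (1 - Re (u * v)) + b^2 * (1 + Re (u * v)) > 0"
proof -
  define c where "c = Re (u * cnj v)"
  define t where "t = Re (u * v)"
  define W where "W = a^2 * (1 - t) + b^2 * (1 + t)"
  have unit: "Re u^2 + Im u^2 = 1" "Re v^2 + Im v^2 = 1"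
    using assms(3,4) cmod_power2[of u] cmod_power2[of v] by simp_all
  have "1 - c = cmod (u - v)^2 / 2"
    using unit unfolding c_def cmod_power2 by (simp add: power2_eq_square algebra_simps)
  moreover have "cmod (u - v)^2 > 0" using assms(5) by simp
  ultimately show c_lt: "1 - c > 0" by linarith
  have "\<bar>t\<bar> \<le> 1"
    using abs_Re_le_cmod[of "u * v"] assms(3,4) by (simp add: t_def norm_mult)
  moreover have "a^2 > 0" "b^2 > 0" using assms(1,2) by simp_all
  ultimately show W_pos: "W > 0"
    unfolding W_def by (cases "t \<le> 0") (auto intro: add_pos_nonneg add_nonneg_pos)
  define d where "d = dist (ecc_point a b u) (ecc_point a b v)"
  have "d^2 = a^2 * (Re u - Re v)^2 + b^2 * (Im u - Im v)^2"
    by (simp add: d_def ecc_point_def dist_Pair_Pair_sqrt) (simp add: power2_eq_square algebra_simps)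
  also have "\<dots> = (1 - c) * W"
  proof -
    have "a^2 * (X - X')^2 + b^2 * (Y - Y')^2 =
        (1 - (X * X' + Y * Y')) * (a^2 * (1 - (X * X' - Y * Y')) + b^2 * (1 + (X * X' - Y * Y')))"
      if "X^2 + Y^2 = 1" "X'^2 + Y'^2 = 1" for X Y X' Y' :: real
      using that by algebra
    from this[OF unit] show ?thesis by (simp add: c_def t_def W_def)
  qed
  finally have "d = sqrt (1 - c) * sqrt W"
    by (metis d_def real_sqrt_mult real_sqrt_unique zero_le_dist)
  moreover have "fst (ecc_point a b u) * fst (ecc_point a b v) / a^2 +
      snd (ecc_point a b u) * snd (ecc_point a b v) / b^2 - 1 = - (1 - c)"
    using assms(1,2) by (simp add: ecc_point_def c_def field_simps power2_eq_square)
  ultimately have "bisector_ratio a b (ecc_point a b u) (ecc_point a b v) =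
      - (1 - c) / (sqrt (1 - c) * sqrt W)"
    by (simp add: bisector_ratio_def d_def)
  also have "\<dots> = - (sqrt (1 - c) * sqrt (1 - c)) / (sqrt (1 - c) * sqrt W)"
    using c_lt by (simp only: real_sqrt_mult_self abs_of_pos)
  also have "\<dots> = - sqrt ((1 - c) / W)"
    using c_lt by (simp add: real_sqrt_divide del: real_sqrt_mult_self)
  finally show "bisector_ratio a b (ecc_point a b u) (ecc_point a b v) =
    - sqrt ((1 - Re (u * cnj v)) / (a^2 * (1 - Re (u * v)) + b^2 * (1 + Re (u * v))))"
    unfolding c_def W_def t_def .
qed

section \<open>The cubic of a 3-periodic\<close>

text \<open>For unit \<open>u, v\<close> this is \<open>2 u v (D Re(u v) - Re(u cnj v) + T/2)\<close>: the relation between the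
  eccentric anomalies of two vertices of a 3-periodic, made polynomial.\<close>
definition chord_poly :: "real \<Rightarrow> real \<Rightarrow> complex \<Rightarrow> complex \<Rightarrow> complex" where
  "chord_poly D T u v = of_real D * u^2 * v^2 - u^2 - v^2 + of_real T * u * v + of_real D"

lemma chord_poly_eq_0_iff:
  assumes "cmod u = 1" "cmod v = 1"
  shows "chord_poly D T u v = 0 \<longleftrightarrow> D * Re (u * v) - Re (u * cnj v) + T / 2 = 0"
proof -
  have unit: "u * cnj u = 1" "v * cnj v = 1"
    using assms complex_norm_square[of u] complex_norm_square[of v] by simp_all
  have re: "of_real (2 * Re z) = z + cnj z" for z by (simp add: complex_add_cnj)
  have "u * v * of_real (2 * D * Re (u * v) - 2 * Re (u * cnj v) + T) =
      u * v * (of_real D * of_real (2 * Re (u * v)) - of_real (2 * Re (u * cnj v)) + of_real T)"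
    by simp
  also have "\<dots> = chord_poly D T u v"
    unfolding re chord_poly_def complex_cnj_mult complex_cnj_cnj using unit by algebra
  finally have "u * v * of_real (2 * D * Re (u * v) - 2 * Re (u * cnj v) + T) = chord_poly D T u v" .
  moreover have "u * v \<noteq> 0" using assms by auto
  ultimately have "chord_poly D T u v = 0 \<longleftrightarrow> 2 * D * Re (u * v) - 2 * Re (u * cnj v) + T = 0"
    by (metis mult_eq_0_iff of_real_eq_0_iff)
  then show ?thesis by (auto simp: field_simps)
qed

lemma cubic_vieta:
  fixes r1 r2 r3 c2 c1 c0 :: "'a::idom"
  assumes "distinct [r1, r2, r3]"
    and "r1^3 + c2 * r1^2 + c1 * r1 + c0 = 0"
    and "r2^3 + c2 * r2^2 + c1 * r2 + c0 = 0"
    and "r3^3 + c2 * r3^2 + c1 * r3 + c0 = 0"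
  shows "c2 = - (r1 + r2 + r3)" "c1 = r1 * r2 + r1 * r3 + r2 * r3" "c0 = - (r1 * r2 * r3)"
proof -
  have "(r1 - r2) * (r1^2 + r1 * r2 + r2^2 + c2 * (r1 + r2) + c1) = 0" using assms(2,3) by algebra
  then have A12: "r1^2 + r1 * r2 + r2^2 + c2 * (r1 + r2) + c1 = 0" using assms(1) by simp
  have "(r1 - r3) * (r1^2 + r1 * r3 + r3^2 + c2 * (r1 + r3) + c1) = 0" using assms(2,4) by algebra
  then have A13: "r1^2 + r1 * r3 + r3^2 + c2 * (r1 + r3) + c1 = 0" using assms(1) by simp
  have "(r2 - r3) * (r1 + r2 + r3 + c2) = 0" using A12 A13 by algebra
  then have "r1 + r2 + r3 + c2 = 0" using assms(1) by simp
  then show c2: "c2 = - (r1 + r2 + r3)" by algebra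
  show c1: "c1 = r1 * r2 + r1 * r3 + r2 * r3" using A12 c2 by algebra
  show "c0 = - (r1 * r2 * r3)" using assms(2) c1 c2 by algebra
qed

text \<open>The eccentric anomalies of a 3-periodic are the roots of \<open>u\<^sup>3 - D w u\<^sup>2 - D u + w\<close>
  for a unit \<open>w\<close>; this is the Vieta form of that statement.\<close>
definition periodic_roots :: "real \<Rightarrow> complex \<Rightarrow> complex \<Rightarrow> complex \<Rightarrow> complex \<Rightarrow> bool" where
  "periodic_roots D w u1 u2 u3 \<longleftrightarrow>
     u1 + u2 + u3 = of_real D * w \<and> u1 * u2 + u1 * u3 + u2 * u3 = - of_real D \<and> u1 * u2 * u3 = - w"

lemma periodic_roots_cubic:
  assumes "periodic_roots D w u1 u2 u3" "u \<in> {u1, u2, u3}"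
  shows "u^3 - of_real D * w * u^2 - of_real D * u + w = 0"
proof -
  have "u^3 - of_real D * w * u^2 - of_real D * u + w = (u - u1) * (u - u2) * (u - u3)"
    using assms(1) unfolding periodic_roots_def by algebra
  then show ?thesis using assms(2) by auto
qed

lemma periodic_roots_chord_poly:
  assumes "periodic_roots D w u1 u2 u3"
  shows "chord_poly D (D^2 - 1) u1 u2 = 0" "chord_poly D (D^2 - 1) u2 u3 = 0"
    "chord_poly D (D^2 - 1) u3 u1 = 0"
  using assms unfolding periodic_roots_def chord_poly_def of_real_diff of_real_power of_real_1
  by algebra+

lemma periodic_roots_norm:
  assumes "periodic_roots D w u1 u2 u3" "cmod u1 = 1" "cmod u2 = 1" "cmod u3 = 1"
  shows "cmod w = 1"
  using assms unfolding periodic_roots_def by (metis norm_minus_cancel norm_mult mult_1)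

lemma periodic_roots_of_chord_poly:
  assumes distinct: "distinct [u1, u2, u3]"
    and unit: "cmod u1 = 1" "cmod u2 = 1" "cmod u3 = 1" and "D \<noteq> 0"
    and F12: "chord_poly D T u1 u2 = 0" and F23: "chord_poly D T u2 u3 = 0"
    and F31: "chord_poly D T u3 u1 = 0"
  shows "T = D^2 - 1" and "periodic_roots D (- (u1 * u2 * u3)) u1 u2 u3"
proof -
  define e1 where "e1 = u1 + u2 + u3"
  define e2 where "e2 = u1 * u2 + u1 * u3 + u2 * u3"
  define e3 where "e3 = u1 * u2 * u3"
  have Dc: "(of_real D :: complex) \<noteq> 0" using \<open>D \<noteq> 0\<close> by simp
  \<comment> \<open>subtracting two chord relations through a common vertex, each \<open>u\<^sub>i\<close> is a root of one cubic\<close>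
  have root: "u^3 + (- e1) * u^2 + (- (1 + of_real T) / of_real D) * u + e1 / of_real D = 0"
    if "of_real D * u^2 * (e1 - u) - (e1 - u) + of_real T * u = 0" for u
  proof -
    have "of_real D * (u^3 + (- e1) * u^2 + (- (1 + of_real T) / of_real D) * u + e1 / of_real D) =
        - (of_real D * u^2 * (e1 - u) - (e1 - u) + of_real T * u)"
      using Dc by (simp add: field_simps power2_eq_square power3_eq_cube)
    then show ?thesis using that Dc by simp
  qed
  have "(u2 - u3) * (of_real D * u1^2 * (e1 - u1) - (e1 - u1) + of_real T * u1) = 0"
    using F12 F31 unfolding e1_def chord_poly_def by algebra
  then have r1: "of_real D * u1^2 * (e1 - u1) - (e1 - u1) + of_real T * u1 = 0" using distinct by simp
  have "(u1 - u3) * (of_real D * u2^2 * (e1 - u2) - (e1 - u2) + of_real T * u2) = 0"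
    using F12 F23 unfolding e1_def chord_poly_def by algebra
  then have r2: "of_real D * u2^2 * (e1 - u2) - (e1 - u2) + of_real T * u2 = 0" using distinct by simp
  have "(u1 - u2) * (of_real D * u3^2 * (e1 - u3) - (e1 - u3) + of_real T * u3) = 0"
    using F31 F23 unfolding e1_def chord_poly_def by algebra
  then have r3: "of_real D * u3^2 * (e1 - u3) - (e1 - u3) + of_real T * u3 = 0" using distinct by simp
  note vieta = cubic_vieta[OF distinct root[OF r1] root[OF r2] root[OF r3]]
  have e2: "e2 = - (1 + of_real T) / of_real D" using vieta(2) by (simp add: e2_def)
  have e1: "e1 = - of_real D * e3" using vieta(3) Dc by (simp add: e1_def e3_def field_simps)
  \<comment> \<open>\<open>e\<^sub>2\<close> is real, and conjugation inverts unit numbers, so \<open>e\<^sub>2 e\<^sub>3 = e\<^sub>1 = -D e\<^sub>3\<close>\<close>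
  have "cnj e2 * e3 = e1"
  proof -
    have "u * cnj u = 1" if "cmod u = 1" for u using that complex_norm_square[of u] by simp
    then have "u1 * cnj u1 = 1" "u2 * cnj u2 = 1" "u3 * cnj u3 = 1" using unit by simp_all
    then show ?thesis unfolding e1_def e2_def e3_def complex_cnj_add complex_cnj_mult by algebra
  qed
  then have "e3 * (e2 + of_real D) = 0" using e1 by (simp add: e2 algebra_simps)
  moreover have "e3 \<noteq> 0" using unit by (auto simp: e3_def)
  ultimately have e2D: "e2 = - of_real D" by (simp add: eq_neg_iff_add_eq_0)
  then have "complex_of_real (1 + T) = of_real (D^2)"
    using e2 Dc by (simp add: field_simps power2_eq_square)
  then show "T = D^2 - 1" by (simp only: of_real_eq_iff)
  show "periodic_roots D (- (u1 * u2 * u3)) u1 u2 u3"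
    using e1 e2D unfolding periodic_roots_def e1_def e2_def e3_def by simp
qed

section \<open>The parameter of the cubic\<close>

lemma delta_sq: "delta a b ^ 2 = a^4 - a^2 * b^2 + b^4" and delta_nonneg: "delta a b \<ge> 0"
proof -
  have "a^4 - a^2 * b^2 + b^4 = (a^2 - b^2 / 2)^2 + 3 * b^4 / 4" by algebra
  also have "\<dots> \<ge> 0" by simp
  finally show "delta a b ^ 2 = a^4 - a^2 * b^2 + b^4" "delta a b \<ge> 0"
    unfolding delta_def by simp_all
qed

lemma periodic_param_equation_unique:
  fixes a b D D' :: real
  assumes "b^2 < a^2" "0 \<le> D" "0 \<le> D'"
    and "D^2 * (a^2 - b^2) + 2 * D * (a^2 + b^2) - 3 * (a^2 - b^2) = 0"
    and "D'^2 * (a^2 - b^2) + 2 * D' * (a^2 + b^2) - 3 * (a^2 - b^2) = 0"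
  shows "D = D'"
proof -
  have product: "(D - D') * ((D + D') * (a^2 - b^2) + 2 * (a^2 + b^2)) = 0"
    using assms(4,5) by algebra
  have "(D + D') * (a^2 - b^2) \<ge> 0" using assms(1-3) by simp
  moreover have "a^2 + b^2 > 0" using assms(1) by (smt (verit) zero_le_power2)
  ultimately have "(D + D') * (a^2 - b^2) + 2 * (a^2 + b^2) > 0" by (intro add_nonneg_pos) auto
  with product show ?thesis by simp
qed

lemma periodic_param:
  fixes a b D :: real
  assumes "0 < b" "b < a" and D_def: "D = (2 * delta a b - a^2 - b^2) / (a^2 - b^2)"
  shows "0 < D" "D < 1" "D^2 * (a^2 - b^2) + 2 * D * (a^2 + b^2) - 3 * (a^2 - b^2) = 0"
proof -
  have ab: "a^2 - b^2 > 0" using assms(1,2) by (simp add: power_strict_mono)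
  have "(a^2 + b^2)^2 < (2 * delta a b)^2"
  proof -
    have "(2 * delta a b)^2 - (a^2 + b^2)^2 = 3 * (a^2 - b^2)^2"
      unfolding power_mult_distrib delta_sq by algebra
    moreover have "3 * (a^2 - b^2)^2 > 0" using ab by simp
    ultimately show ?thesis by linarith
  qed
  then have "a^2 + b^2 < 2 * delta a b" by (rule power_less_imp_less_base) (simp add: delta_nonneg)
  then show "0 < D" using ab by (simp add: D_def)
  have "delta a b ^ 2 < (a^2)^2"
  proof -
    have "(a^2)^2 - delta a b ^ 2 = b^2 * (a^2 - b^2)" unfolding delta_sq by algebra
    moreover have "b^2 * (a^2 - b^2) > 0" using ab assms(1) by simp
    ultimately show ?thesis by linarith
  qed
  then have "delta a b < a^2" by (rule power_less_imp_less_base) simp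
  then show "D < 1" using ab by (simp add: D_def)
  have "(D * (a^2 - b^2) + a^2 + b^2)^2 = 4 * (a^4 - a^2 * b^2 + b^4)"
    using ab by (simp add: D_def power_mult_distrib delta_sq)
  then have "(a^2 - b^2) * (D^2 * (a^2 - b^2) + 2 * D * (a^2 + b^2) - 3 * (a^2 - b^2)) = 0"
    by algebra
  then show "D^2 * (a^2 - b^2) + 2 * D * (a^2 + b^2) - 3 * (a^2 - b^2) = 0" using ab by simp
qed

lemma semi_axes_w5:
  fixes a b D :: real
  assumes "0 < b" "b < a" and D_def: "D = (2 * delta a b - a^2 - b^2) / (a^2 - b^2)"
  shows "(- w5' a b + w5'' a b * delta a b) / w5 a b = (4 * a^2 * D + (a^2 - b^2) * (1 - D)) / (8 * a)"
    and "(w5' b a - w5'' b a * delta a b) / w5 b a = (4 * b^2 * D + (a^2 - b^2) * (1 + D)) / (8 * b)"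
proof -
  have ab: "a^2 - b^2 \<noteq> 0" using assms(1,2) by (simp add: power_strict_mono)
  have "a \<noteq> 0" "b \<noteq> 0" using assms(1,2) by simp_all
  have DD: "D * (a^2 - b^2) = 2 * delta a b - a^2 - b^2" using ab by (simp add: D_def)
  have "(4 * a^2 * D + (a^2 - b^2) * (1 - D)) / (8 * a) =
      ((a^2 - b^2)^2 + (3 * a^2 + b^2) * (D * (a^2 - b^2))) / (8 * a * (a^2 - b^2))"
    using ab \<open>a \<noteq> 0\<close> \<open>b \<noteq> 0\<close> by (simp add: field_simps power2_eq_square)
  also have "\<dots> = 2 * (- w5' a b + w5'' a b * delta a b) / (2 * w5 a b)"
    unfolding DD w5_def w5'_def w5''_def by (simp add: algebra_simps power2_eq_square power4_eq_xxxx)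
  finally show "(- w5' a b + w5'' a b * delta a b) / w5 a b = (4 * a^2 * D + (a^2 - b^2) * (1 - D)) / (8 * a)"
    by (subst (asm) mult_divide_mult_cancel_left) simp_all
  have "(4 * b^2 * D + (a^2 - b^2) * (1 + D)) / (8 * b) =
      ((b^2 - a^2) * (a^2 - b^2) - (a^2 + 3 * b^2) * (D * (a^2 - b^2))) / (8 * b * (b^2 - a^2))"
    using ab \<open>a \<noteq> 0\<close> \<open>b \<noteq> 0\<close> by (simp add: field_simps power2_eq_square)
  also have "\<dots> = 2 * (w5' b a - w5'' b a * delta a b) / (2 * w5 b a)"
    unfolding DD w5_def w5'_def w5''_def by (simp add: algebra_simps power2_eq_square power4_eq_xxxx)
  finally show "(w5' b a - w5'' b a * delta a b) / w5 b a = (4 * b^2 * D + (a^2 - b^2) * (1 + D)) / (8 * b)"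
    by (subst (asm) mult_divide_mult_cancel_left) simp_all
qed

section \<open>Existence of 3-periodics\<close>

lemma cis_add_cis: "cis A + cis B = 2 * complex_of_real (cos ((A - B) / 2)) * cis ((A + B) / 2)"
proof -
  have "2 * complex_of_real (cos ((A - B) / 2)) = cis ((A - B) / 2) + cis (- ((A - B) / 2))"
    by (simp add: complex_eq_iff)
  then have "2 * complex_of_real (cos ((A - B) / 2)) * cis ((A + B) / 2) =
      cis ((A - B) / 2) * cis ((A + B) / 2) + cis (- ((A - B) / 2)) * cis ((A + B) / 2)"
    by (simp add: algebra_simps)
  also have "\<dots> = cis A + cis B" by (simp add: cis_mult field_simps)
  finally show ?thesis by simp
qed

lemma cis_neq_within_period:
  assumes "x < y" "y < x + 2 * pi"
  shows "cis x \<noteq> cis y"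
proof
  assume "cis x = cis y"
  then have "cos (y - x) = 1" by (metis cis.sel(1) cis_divide divide_self_if cis_neq_zero one_complex.sel(1))
  then obtain n :: int where n: "y - x = real_of_int n * 2 * pi" unfolding cos_one_2pi_int by blast
  then have "0 < real_of_int n * 2 * pi" "real_of_int n * 2 * pi < 1 * 2 * pi" using assms by linarith+
  then have "0 < n" "n < 1" by (simp_all add: zero_less_mult_iff)
  then show False by simp
qed

text \<open>Writing \<open>w = cis \<phi>\<close>, the cubic at \<open>u = cis \<theta>\<close> is \<open>2 cis((3\<theta>+\<phi>)/2)\<close> times a real function of
  \<open>\<theta>\<close>, which changes sign on each of three consecutive arcs of length \<open>2\<pi>/3\<close>.\<close>
lemma periodic_cubic_cis:
  "(cis th)^3 - of_real D * cis ph * (cis th)^2 - of_real D * cis th + cis ph =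
    2 * cis ((3 * th + ph) / 2) * of_real (cos ((3 * th - ph) / 2) - D * cos ((th + ph) / 2))"
proof -
  have "(cis th)^3 - of_real D * cis ph * (cis th)^2 - of_real D * cis th + cis ph =
      (cis (3 * th) + cis ph) - of_real D * (cis (ph + 2 * th) + cis th)"
    using Complex.DeMoivre[of th 3] Complex.DeMoivre[of th 2] by (simp add: cis_mult algebra_simps)
  also have "\<dots> = 2 * cis ((3 * th + ph) / 2) * of_real (cos ((3 * th - ph) / 2) - D * cos ((th + ph) / 2))"
    unfolding cis_add_cis by (simp add: algebra_simps add_divide_distrib diff_divide_distrib)
  finally show ?thesis .
qed

lemma periodic_roots_exist:
  assumes D: "\<bar>D\<bar> < 1" and w: "cmod w = 1"
  obtains u1 u2 u3 where "distinct [u1, u2, u3]" "cmod u1 = 1" "cmod u2 = 1" "cmod u3 = 1"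
    "periodic_roots D w u1 u2 u3"
proof -
  define ph where "ph = Arg w"
  have "w \<noteq> 0" using w by auto
  then have w_cis: "w = cis ph" using cis_Arg[of w] w by (simp add: ph_def sgn_div_norm)
  define h where "h = (\<lambda>th. cos ((3 * th - ph) / 2) - D * cos ((th + ph) / 2))"
  have cont: "\<forall>x. isCont h x" unfolding h_def by (auto intro!: continuous_intros)
  have small: "\<bar>D * cos x\<bar> < 1" for x
  proof -
    have "\<bar>D * cos x\<bar> \<le> \<bar>D\<bar>"
      using abs_cos_le_one[of x] by (simp add: abs_mult mult_left_le)
    then show ?thesis using D by linarith
  qed
  define t where "t k = ph / 3 + k * (2 * pi / 3)" for k :: real
  have h_t: "h (t k) = cos (k * pi) - D * cos ((t k + ph) / 2)" for k
    by (simp add: h_def t_def field_simps)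
  have signs: "h (t 0) > 0" "h (t 1) < 0" "h (t 2) > 0" "h (t 3) < 0"
    unfolding h_t using small by (simp_all add: abs_less_iff)
  have order: "t 0 \<le> t 1" "t 1 \<le> t 2" "t 2 \<le> t 3" by (simp_all add: t_def)
  obtain ta where ta: "t 0 \<le> ta" "ta \<le> t 1" "h ta = 0"
    using IVT2[of h "t 1" 0 "t 0"] signs order cont by force
  obtain tb where tb: "t 1 \<le> tb" "tb \<le> t 2" "h tb = 0"
    using IVT[of h "t 1" 0 "t 2"] signs order cont by force
  obtain tc where tc: "t 2 \<le> tc" "tc \<le> t 3" "h tc = 0"
    using IVT2[of h "t 3" 0 "t 2"] signs order cont by force
  have "ta \<noteq> t 0" "ta \<noteq> t 1" "tb \<noteq> t 2" "tc \<noteq> t 3" using ta tb tc signs by auto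
  then have arcs: "t 0 < ta" "ta < tb" "tb < tc" "tc < t 0 + 2 * pi"
    using ta tb tc by (auto simp: t_def)
  have distinct: "distinct [cis ta, cis tb, cis tc]"
    using cis_neq_within_period[of ta tb] cis_neq_within_period[of ta tc]
      cis_neq_within_period[of tb tc] arcs by auto
  have roots: "(cis s)^3 + (- of_real D * w) * (cis s)^2 + (- of_real D) * cis s + w = 0"
    if "h s = 0" for s
    using that periodic_cubic_cis[of s D ph] by (simp add: w_cis h_def algebra_simps)
  note vieta = cubic_vieta[OF distinct roots[OF ta(3)] roots[OF tb(3)] roots[OF tc(3)]]
  have "periodic_roots D w (cis ta) (cis tb) (cis tc)"
    unfolding periodic_roots_def using vieta(1) vieta(2)[symmetric] vieta(3) by simp
  with distinct show ?thesis by (intro that) simp_all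
qed

section \<open>3-periodics in eccentric-anomaly coordinates\<close>

lemma chord_poly_of_bisector_ratio:
  assumes "a \<noteq> 0" "b \<noteq> 0" "cmod u = 1" "cmod v = 1" "u \<noteq> v"
    and "bisector_ratio a b (ecc_point a b u) (ecc_point a b v) = J"
  shows "chord_poly (J^2 * (a^2 - b^2)) (2 * (1 - J^2 * (a^2 + b^2))) u v = 0" and "J \<noteq> 0"
proof -
  define c where "c = Re (u * cnj v)"
  define t where "t = Re (u * v)"
  define W where "W = a^2 * (1 - t) + b^2 * (1 + t)"
  note ratio = bisector_ratio_ecc_point[OF assms(1-5), folded c_def t_def, folded W_def]
  then have J: "J = - sqrt ((1 - c) / W)" using assms(6) by simp
  then show "J \<noteq> 0" using ratio(2,3) by simp
  have "J^2 * W = 1 - c" using J ratio(2,3) by simp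
  then have "J^2 * (a^2 - b^2) * t - c + 2 * (1 - J^2 * (a^2 + b^2)) / 2 = 0"
    unfolding W_def by simp algebra
  then show "chord_poly (J^2 * (a^2 - b^2)) (2 * (1 - J^2 * (a^2 + b^2))) u v = 0"
    using chord_poly_eq_0_iff[OF assms(3,4)] by (simp add: c_def t_def)
qed

lemma bisector_ratio_of_chord_poly:
  assumes "0 < b" "b < a" "0 < D" and quad: "D^2 * (a^2 - b^2) + 2 * D * (a^2 + b^2) - 3 * (a^2 - b^2) = 0"
    and "cmod u = 1" "cmod v = 1" "u \<noteq> v" and "chord_poly D (D^2 - 1) u v = 0"
  shows "bisector_ratio a b (ecc_point a b u) (ecc_point a b v) = - sqrt (D / (a^2 - b^2))"
proof -
  have ab: "a^2 - b^2 > 0" using assms(1,2) by (simp add: power_strict_mono)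
  define c where "c = Re (u * cnj v)"
  define t where "t = Re (u * v)"
  define W where "W = a^2 * (1 - t) + b^2 * (1 + t)"
  note ratio = bisector_ratio_ecc_point[of a b u v, folded c_def t_def, folded W_def]
  have "D * t - c + (D^2 - 1) / 2 = 0"
    using chord_poly_eq_0_iff[OF assms(5,6)] assms(8) by (simp add: c_def t_def)
  then have "(1 - c) * (a^2 - b^2) = D * W" using quad unfolding W_def by algebra
  then have "(1 - c) / W = D / (a^2 - b^2)"
    using ratio(3) assms ab by (simp add: field_simps)
  then show ?thesis using ratio(1) assms by (simp add: W_def)
qed

lemma periodic_roots_of_three_periodic:
  assumes "0 < b" "b < a" and D_def: "D = (2 * delta a b - a^2 - b^2) / (a^2 - b^2)"
    and unit: "cmod u1 = 1" "cmod u2 = 1" "cmod u3 = 1"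
    and periodic: "three_periodic a b (ecc_point a b u1) (ecc_point a b u2) (ecc_point a b u3)"
  shows "distinct [u1, u2, u3]" and "periodic_roots D (- (u1 * u2 * u3)) u1 u2 u3"
proof -
  have ab: "a^2 - b^2 > 0" and nz: "a \<noteq> 0" "b \<noteq> 0"
    using assms(1,2) by (simp_all add: power_strict_mono)
  note periodic = periodic[unfolded three_periodic_iff_bisector_ratio[OF nz]]
  then show distinct: "distinct [u1, u2, u3]" using nondegenerate_ecc_point_iff[OF nz unit] by simp
  define J where "J = bisector_ratio a b (ecc_point a b u1) (ecc_point a b u2)"
  define D' where "D' = J^2 * (a^2 - b^2)"
  define T where "T = 2 * (1 - J^2 * (a^2 + b^2))"
  have ratio23: "bisector_ratio a b (ecc_point a b u2) (ecc_point a b u3) = J"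
    and ratio31: "bisector_ratio a b (ecc_point a b u3) (ecc_point a b u1) = J"
    using periodic by (simp_all add: J_def)
  have neq: "u1 \<noteq> u2" "u2 \<noteq> u3" "u3 \<noteq> u1" using distinct by auto
  note chord12 =
      chord_poly_of_bisector_ratio[OF nz unit(1,2) neq(1) J_def[symmetric], folded D'_def T_def]
    and chord23 = chord_poly_of_bisector_ratio[OF nz unit(2,3) neq(2) ratio23, folded D'_def T_def]
    and chord31 = chord_poly_of_bisector_ratio[OF nz unit(3,1) neq(3) ratio31, folded D'_def T_def]
  have "D' > 0" using chord12(2) distinct ab by (simp add: D'_def)
  then have "D' \<noteq> 0" by simp
  note roots = periodic_roots_of_chord_poly[OF distinct unit this chord12(1) chord23(1) chord31(1)]
  have "D'^2 * (a^2 - b^2) + 2 * D' * (a^2 + b^2) - 3 * (a^2 - b^2) = 0"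
    using roots(1) unfolding T_def D'_def by algebra
  then have "D' = D"
    using periodic_param_equation_unique periodic_param[OF assms(1-3)] \<open>D' > 0\<close> ab
    by (metis less_eq_real_def diff_gt_0_iff_gt)
  then show "periodic_roots D (- (u1 * u2 * u3)) u1 u2 u3" using roots(2) distinct by simp
qed

lemma three_periodic_of_periodic_roots:
  assumes "0 < b" "b < a" "0 < D"
    and quad: "D^2 * (a^2 - b^2) + 2 * D * (a^2 + b^2) - 3 * (a^2 - b^2) = 0"
    and distinct: "distinct [u1, u2, u3]" and unit: "cmod u1 = 1" "cmod u2 = 1" "cmod u3 = 1"
    and roots: "periodic_roots D w u1 u2 u3"
  shows "three_periodic a b (ecc_point a b u1) (ecc_point a b u2) (ecc_point a b u3)"
proof -
  have nz: "a \<noteq> 0" "b \<noteq> 0" using assms(1,2) by simp_all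
  note ratio = bisector_ratio_of_chord_poly[OF assms(1-4)]
  have neq: "u1 \<noteq> u2" "u2 \<noteq> u3" "u3 \<noteq> u1" using distinct by auto
  note chords = periodic_roots_chord_poly[OF roots]
  show ?thesis
    unfolding three_periodic_iff_bisector_ratio[OF nz] nondegenerate_ecc_point_iff[OF nz unit]
      on_ellipse_ecc_point[OF nz]
    using distinct unit ratio[OF unit(1,2) neq(1) chords(1)] ratio[OF unit(2,3) neq(2) chords(2)]
      ratio[OF unit(3,1) neq(3) chords(3)]
    by simp
qed

text \<open>For \<open>u = X + i Y\<close> and \<open>w = W\<^sub>1 + i W\<^sub>2\<close>, the real part of \<open>u\<^sup>-\<^sup>1\<close> times the cubic is
  \<open>2 X\<^sup>2 + (1 - D) W\<^sub>1 X + (1 + D) W\<^sub>2 Y - 1 - D\<close>; together with \<open>X\<^sup>2 + Y\<^sup>2 = 1\<close> this puts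
  \<open>ecc_point a b u\<close> on a circle about \<open>ecc_point A B w\<close>, the circumcenter of the 3-periodic.\<close>
lemma dist_ecc_point_circumcenter:
  fixes a b D :: real and u w :: complex
  assumes "a \<noteq> 0" "b \<noteq> 0" "cmod u = 1" "cmod w = 1"
    and cubic: "u^3 - of_real D * w * u^2 - of_real D * u + w = 0"
  defines "A \<equiv> - (a^2 - b^2) * (1 - D) / (4 * a)" and "B \<equiv> - (a^2 - b^2) * (1 + D) / (4 * b)"
  shows "dist (ecc_point a b u) (ecc_point A B w) ^ 2 =
    b^2 + (a^2 - b^2) * (1 + D) / 2 + (A * Re w)^2 + (B * Im w)^2"
proof -
  obtain X Y W1 W2 where uw: "u = Complex X Y" "w = Complex W1 W2" by (metis complex.collapse)
  have unit: "X^2 + Y^2 = 1" "W1^2 + W2^2 = 1"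
    using assms(3,4) by (simp_all add: uw cmod_def)
  from cubic have
    re: "X^3 - 3 * X * Y^2 - D * (W1 * (X^2 - Y^2) - W2 * 2 * X * Y) - D * X + W1 = 0" and
    im: "3 * X^2 * Y - Y^3 - D * (W1 * 2 * X * Y + W2 * (X^2 - Y^2)) - D * Y + W2 = 0"
    by (simp_all add: uw complex_eq_iff power3_eq_cube power2_eq_square algebra_simps)
  have line: "2 * X^2 + (1 - D) * W1 * X + (1 + D) * W2 * Y = 1 + D"
    using unit re im by algebra
  have "2 * a * A = - (a^2 - b^2) * (1 - D) / 2" "2 * b * B = - (a^2 - b^2) * (1 + D) / 2"
    using assms(1,2) by (simp_all add: A_def B_def)
  moreover have "dist (ecc_point a b u) (ecc_point A B w) ^ 2 =
      b^2 * (X^2 + Y^2) + (a^2 - b^2) * X^2 - (2 * a * A) * W1 * X - (2 * b * B) * W2 * Y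
      + (A * W1)^2 + (B * W2)^2"
    by (simp add: uw ecc_point_def dist_Pair_Pair_sqrt) algebra
  ultimately show ?thesis
    using unit line by (simp add: uw) algebra
qed

lemma tri_center_h5_periodic_roots:
  assumes "a \<noteq> 0" "b \<noteq> 0" and distinct: "distinct [u1, u2, u3]"
    and unit: "cmod u1 = 1" "cmod u2 = 1" "cmod u3 = 1" and roots: "periodic_roots D w u1 u2 u3"
  shows "tri_center h5 (ecc_point a b u1) (ecc_point a b u2) (ecc_point a b u3) =
    ecc_point ((4 * a^2 * D + (a^2 - b^2) * (1 - D)) / (8 * a))
      ((4 * b^2 * D + (a^2 - b^2) * (1 + D)) / (8 * b)) w"
proof -
  define C where
    "C = ecc_point (- (a^2 - b^2) * (1 - D) / (4 * a)) (- (a^2 - b^2) * (1 + D) / (4 * b)) w"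
  have "cmod w = 1" using periodic_roots_norm[OF roots unit] .
  note radius = dist_ecc_point_circumcenter[OF assms(1,2) _ this periodic_roots_cubic[OF roots],
      folded C_def]
  have "dist (ecc_point a b u1) C ^ 2 = dist (ecc_point a b u2) C ^ 2"
    "dist (ecc_point a b u1) C ^ 2 = dist (ecc_point a b u3) C ^ 2"
    using radius[OF unit(1)] radius[OF unit(2)] radius[OF unit(3)] by simp_all
  then have "dist (ecc_point a b u1) C = dist (ecc_point a b u2) C"
    "dist (ecc_point a b u1) C = dist (ecc_point a b u3) C"
    by (auto elim: power2_eq_imp_eq)
  then have "tri_center h5 (ecc_point a b u1) (ecc_point a b u2) (ecc_point a b u3) =
      (1/2) *\<^sub>R (ecc_point a b u1 + ecc_point a b u2 + ecc_point a b u3 - C)"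
    using tri_center_h5_circumcenter nondegenerate_ecc_point_iff[OF assms(1,2) unit] distinct by blast
  moreover have "ecc_point a b u1 + ecc_point a b u2 + ecc_point a b u3 = ecc_point (a * D) (b * D) w"
  proof -
    have "u1 + u2 + u3 = of_real D * w" using roots by (simp add: periodic_roots_def)
    from arg_cong[OF this, of Re] arg_cong[OF this, of Im] show ?thesis
      by (simp add: ecc_point_def distrib_left[symmetric])
  qed
  ultimately have "tri_center h5 (ecc_point a b u1) (ecc_point a b u2) (ecc_point a b u3) =
      (1/2) *\<^sub>R (ecc_point (a * D) (b * D) w - C)"
    by simp
  then show ?thesis
    using assms(1,2) by (simp add: C_def ecc_point_def field_simps power2_eq_square)
qed

lemma locus_h5_eq_ecc_point_image:
  assumes "0 < b" "b < a" and D_def: "D = (2 * delta a b - a^2 - b^2) / (a^2 - b^2)"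
  shows "locus h5 a b = ecc_point ((4 * a^2 * D + (a^2 - b^2) * (1 - D)) / (8 * a))
    ((4 * b^2 * D + (a^2 - b^2) * (1 + D)) / (8 * b)) ` sphere 0 1"
    (is "_ = ?X5 ` _")
proof (intro set_eqI iffI)
  have nz: "a \<noteq> 0" "b \<noteq> 0" using assms(1,2) by simp_all
  note D = periodic_param[OF assms]
  fix Q
  assume "Q \<in> locus h5 a b"
  then obtain P1 P2 P3 where Q: "Q = tri_center h5 P1 P2 P3" and periodic: "three_periodic a b P1 P2 P3"
    unfolding locus_def by blast
  then have "P1 \<in> ecc_point a b ` sphere 0 1" "P2 \<in> ecc_point a b ` sphere 0 1"
    "P3 \<in> ecc_point a b ` sphere 0 1"
    unfolding ellipse_eq_ecc_point_image[OF nz, symmetric] three_periodic_def by simp_all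
  then obtain u1 u2 u3 where unit: "cmod u1 = 1" "cmod u2 = 1" "cmod u3 = 1"
    and P: "P1 = ecc_point a b u1" "P2 = ecc_point a b u2" "P3 = ecc_point a b u3"
    by auto
  note roots = periodic_roots_of_three_periodic[OF assms unit periodic[unfolded P]]
  have "Q = ?X5 (- (u1 * u2 * u3))"
    unfolding Q P by (rule tri_center_h5_periodic_roots[OF nz roots(1) unit roots(2)])
  moreover have "cmod (- (u1 * u2 * u3)) = 1" by (rule periodic_roots_norm[OF roots(2) unit])
  ultimately show "Q \<in> ?X5 ` sphere 0 1" by simp
next
  have nz: "a \<noteq> 0" "b \<noteq> 0" using assms(1,2) by simp_all
  note D = periodic_param[OF assms]
  fix Q
  assume "Q \<in> ?X5 ` sphere 0 1"
  then obtain w where w: "cmod w = 1" and Q: "Q = ?X5 w" by auto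
  have "\<bar>D\<bar> < 1" using D(1,2) by simp
  then obtain u1 u2 u3 where "distinct [u1, u2, u3]" "cmod u1 = 1" "cmod u2 = 1" "cmod u3 = 1"
    and roots: "periodic_roots D w u1 u2 u3"
    using periodic_roots_exist w by blast
  then have "three_periodic a b (ecc_point a b u1) (ecc_point a b u2) (ecc_point a b u3)"
    and "Q = tri_center h5 (ecc_point a b u1) (ecc_point a b u2) (ecc_point a b u3)"
    using three_periodic_of_periodic_roots[OF assms(1,2) D(1,3)] tri_center_h5_periodic_roots[OF nz]
    by (simp_all add: Q)
  then show "Q \<in> locus h5 a b" unfolding locus_def by blast
qed

theorem theorem1:
  fixes a b :: real
  assumes "0 < b" and "b < a"
  shows "locus h5 a b =
    (let a5 = (- w5' a b + w5'' a b * delta a b) / w5 a b;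
         b5 = (w5' b a - w5'' b a * delta a b) / w5 b a
     in {P. (fst P)^2 / a5^2 + (snd P)^2 / b5^2 = 1})"
proof -
  define D where "D = (2 * delta a b - a^2 - b^2) / (a^2 - b^2)"
  define a5 where "a5 = (4 * a^2 * D + (a^2 - b^2) * (1 - D)) / (8 * a)"
  define b5 where "b5 = (4 * b^2 * D + (a^2 - b^2) * (1 + D)) / (8 * b)"
  have "a^2 - b^2 > 0" using assms by (simp add: power_strict_mono)
  moreover note D = periodic_param[OF assms D_def]
  ultimately have "4 * a^2 * D + (a^2 - b^2) * (1 - D) > 0" "4 * b^2 * D + (a^2 - b^2) * (1 + D) > 0"
    using assms by (intro add_pos_pos mult_pos_pos; simp)+
  then have "a5 \<noteq> 0" "b5 \<noteq> 0" using assms unfolding a5_def b5_def by auto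
  then have "locus h5 a b = Collect (on_ellipse a5 b5)"
    unfolding locus_h5_eq_ecc_point_image[OF assms D_def, folded a5_def b5_def]
    by (simp add: ellipse_eq_ecc_point_image)
  then show ?thesis
    using semi_axes_w5[OF assms D_def] by (simp add: a5_def b5_def on_ellipse_def[abs_def])
qed

end
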